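(* For every positive integer $N$, there are exactly $\varphi(N+1)$ binary words $\mathfrak{s}$ over $\{\mathsf{A},\mathsf{B}\}$ with $\mathsf{P}(\mathfrak{s}) = N$, where $\varphi$ is Euler's totient function.
   Context: $\mathsf{P}(\mathfrak{s})$ denotes the number of distinct words that are subsequences (not necessarily contiguous) of the word $\mathfrak{s}$, the empty word included. *)

theory Defs
  imports Main "HOL-Library.Sublist" "HOL-Number_Theory.Totient"
begin

datatype letter = A | B

definition num_subseq :: "letter list \<Rightarrow> nat" where
  "num_subseq s = card {w. subseq w s}"

end

theory Submission
  imports Defs
begin

(* Let a(s) and b(s) be one more than the number of distinct subsequences of s ending in A
   and in B, respectively. Every nonempty subsequence ends in A or B, so P(s) + 1 = a + b.
   The subsequences of s @ [A] ending in A are the subsequences of s extended by A, while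
   those ending in B are unchanged; hence appending A maps (a, b) to (a + b, b) and appending
   B maps it to (a, a + b). Starting from (1, 1), this is the Stern-Brocot walk, which runs
   Euclid's subtractive algorithm backwards and is therefore a bijection from words onto
   coprime pairs of positive integers. So the words with P(s) = N correspond to the coprime
   pairs (a, b) with a + b = N + 1, that is, to the totatives a of N + 1. *)

lemma subseq_singleton_right: "subseq w [c] \<longleftrightarrow> w = [] \<or> w = [c]"
proof
  assume "subseq w [c]"
  moreover from this have "length w \<le> 1"
    by (auto dest: list_emb_length)
  ultimately show "w = [] \<or> w = [c]"
    by (cases w) (auto split: if_splits)
qed auto

lemma subseq_snoc_iff:
  "subseq w (s @ [c]) \<longleftrightarrow> subseq w s \<or> (\<exists>v. w = v @ [c] \<and> subseq v s)"
  by (auto simp: subseq_append_iff subseq_singleton_right)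

lemma finite_subseqs: "finite {w. subseq w s}"
  by (metis List.finite_set set_subseqs_eq)

definition snoc_subseqs :: "'a \<Rightarrow> 'a list \<Rightarrow> 'a list set" where
  "snoc_subseqs c s = {w. subseq (w @ [c]) s}"

lemma finite_snoc_subseqs: "finite (snoc_subseqs c s)"
  by (rule finite_subset[OF _ finite_subseqs[of s]])
    (auto simp: snoc_subseqs_def intro: subseq_order.order_trans)

lemma snoc_subseqs_Nil: "snoc_subseqs c [] = {}"
  by (simp add: snoc_subseqs_def)

lemma snoc_subseqs_snoc_same: "snoc_subseqs c (s @ [c]) = {w. subseq w s}"
  by (simp add: snoc_subseqs_def)

lemma snoc_subseqs_snoc_other: "d \<noteq> c \<Longrightarrow> snoc_subseqs c (s @ [d]) = snoc_subseqs c s"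
  by (auto simp: snoc_subseqs_def subseq_snoc_iff)

lemma subseqs_eq_snoc_subseqs:
  "{w. subseq w s} = insert [] ((\<lambda>w. w @ [A]) ` snoc_subseqs A s \<union> (\<lambda>w. w @ [B]) ` snoc_subseqs B s)"
proof (intro set_eqI iffI)
  fix w assume w: "w \<in> {w. subseq w s}"
  show "w \<in> insert [] ((\<lambda>w. w @ [A]) ` snoc_subseqs A s \<union> (\<lambda>w. w @ [B]) ` snoc_subseqs B s)"
  proof (cases w rule: rev_cases)
    case (snoc v c)
    with w show ?thesis by (cases c) (auto simp: snoc_subseqs_def)
  qed simp
qed (auto simp: snoc_subseqs_def)

lemma num_subseq_eq_card_snoc_subseqs:
  "num_subseq s = 1 + card (snoc_subseqs A s) + card (snoc_subseqs B s)"
proof -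
  have card_snoc_image: "card ((\<lambda>w. w @ [c]) ` X) = card X" for c :: letter and X
    by (rule card_image) (rule inj_onI, simp)
  have "card ((\<lambda>w. w @ [A]) ` snoc_subseqs A s \<union> (\<lambda>w. w @ [B]) ` snoc_subseqs B s)
      = card (snoc_subseqs A s) + card (snoc_subseqs B s)"
    by (subst card_Un_disjoint) (auto simp: finite_snoc_subseqs card_snoc_image)
  then show ?thesis
    unfolding num_subseq_def subseqs_eq_snoc_subseqs
    by (subst card_insert_disjoint) (auto simp: finite_snoc_subseqs)
qed

fun sb_step :: "nat \<times> nat \<Rightarrow> letter \<Rightarrow> nat \<times> nat" where
  "sb_step (a, b) A = (a + b, b)"
| "sb_step (a, b) B = (a, a + b)"

definition sb_pair :: "letter list \<Rightarrow> nat \<times> nat" where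
  "sb_pair s = foldl sb_step (1, 1) s"

lemma sb_pair_Nil [simp]: "sb_pair [] = (1, 1)"
  by (simp add: sb_pair_def)

lemma sb_pair_snoc [simp]: "sb_pair (s @ [c]) = sb_step (sb_pair s) c"
  by (simp add: sb_pair_def)

lemma sb_pair_eq_card_snoc_subseqs:
  "sb_pair s = (card (snoc_subseqs A s) + 1, card (snoc_subseqs B s) + 1)"
proof (induction s rule: rev_induct)
  case Nil
  show ?case by (simp add: snoc_subseqs_Nil)
next
  case (snoc c s)
  then show ?case
    using num_subseq_eq_card_snoc_subseqs[of s]
    by (cases c) (simp_all add: snoc_subseqs_snoc_same snoc_subseqs_snoc_other num_subseq_def)
qed

lemma num_subseq_sb_pair: "sb_pair s = (a, b) \<Longrightarrow> num_subseq s + 1 = a + b"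
  by (simp add: sb_pair_eq_card_snoc_subseqs num_subseq_eq_card_snoc_subseqs)

lemma sb_pair_pos: "sb_pair s = (a, b) \<Longrightarrow> 0 < a \<and> 0 < b"
proof (induction s arbitrary: a b rule: rev_induct)
  case (snoc c s)
  then show ?case by (cases "sb_pair s"; cases c) auto
qed simp

lemma coprime_sb_pair: "sb_pair s = (a, b) \<Longrightarrow> coprime a b"
proof (induction s arbitrary: a b rule: rev_induct)
  case (snoc c s)
  then show ?case by (cases "sb_pair s"; cases c) (auto simp: coprime_iff_gcd_eq_1)
qed simp

lemma sb_pair_components_eq_iff: "sb_pair s = (a, b) \<Longrightarrow> a = b \<longleftrightarrow> s = []"
  using sb_pair_pos[of "butlast s"]
  by (cases s rule: rev_cases; cases "sb_pair (butlast s)"; cases "last s") auto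

lemma sb_pair_snoc_less_iff: "sb_pair (s @ [c]) = (a, b) \<Longrightarrow> b < a \<longleftrightarrow> c = A"
  using sb_pair_pos[of s] by (cases "sb_pair s"; cases c) auto

lemma sb_step_inj: "sb_step p c = sb_step q c \<Longrightarrow> p = q"
  by (cases p; cases q; cases c) auto

lemma inj_sb_pair: "inj sb_pair"
proof (rule injI)
  show "sb_pair s = sb_pair t \<Longrightarrow> s = t" for s t
  proof (induction s arbitrary: t rule: rev_induct)
    case Nil
    then show ?case by (metis sb_pair_components_eq_iff sb_pair_Nil)
  next
    case (snoc c s)
    obtain a b where ab: "sb_pair (s @ [c]) = (a, b)" by fastforce
    with snoc.prems obtain t' d where t: "t = t' @ [d]"
      by (metis sb_pair_components_eq_iff snoc_eq_iff_butlast)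
    have "c = d"
      using sb_pair_snoc_less_iff[OF ab] sb_pair_snoc_less_iff[of t' d a b] ab snoc.prems t
      by (cases c; cases d) auto
    with snoc.prems t have "sb_pair s = sb_pair t'"
      by (auto intro: sb_step_inj)
    with snoc.IH t \<open>c = d\<close> show ?case by simp
  qed
qed

lemma sb_pair_surj: "0 < a \<Longrightarrow> 0 < b \<Longrightarrow> coprime a b \<Longrightarrow> \<exists>s. sb_pair s = (a, b)"
proof (induction "a + b" arbitrary: a b rule: less_induct)
  case less
  consider "a = b" | "b < a" | "a < b" by linarith
  then show ?case
  proof cases
    case 1
    with less.prems have "(a, b) = sb_pair []" by simp
    then show ?thesis by metis
  next
    case 2
    with less.prems have "coprime (a - b) b"
      by (simp add: coprime_iff_gcd_eq_1 gcd_diff1_nat)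
    with less.prems 2 have "\<exists>s. sb_pair s = (a - b, b)"
      by (intro less.hyps) auto
    then obtain s where "sb_pair s = (a - b, b)" ..
    with 2 have "sb_pair (s @ [A]) = (a, b)" by simp
    then show ?thesis ..
  next
    case 3
    with less.prems have "coprime a (b - a)"
      by (simp add: coprime_iff_gcd_eq_1 gcd_diff1_nat gcd.commute[of a])
    with less.prems 3 have "\<exists>s. sb_pair s = (a, b - a)"
      by (intro less.hyps) auto
    then obtain s where "sb_pair s = (a, b - a)" ..
    with 3 have "sb_pair (s @ [B]) = (a, b)" by simp
    then show ?thesis ..
  qed
qed

lemma range_sb_pair: "range sb_pair = {(a, b). 0 < a \<and> 0 < b \<and> coprime a b}"
proof (intro equalityI subsetI)
  fix p assume "p \<in> range sb_pair"
  then obtain s where "sb_pair s = p" by blast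
  then show "p \<in> {(a, b). 0 < a \<and> 0 < b \<and> coprime a b}"
    using sb_pair_pos[of s] coprime_sb_pair[of s] by (cases p) auto
next
  fix p :: "nat \<times> nat" assume "p \<in> {(a, b). 0 < a \<and> 0 < b \<and> coprime a b}"
  then show "p \<in> range sb_pair"
    using sb_pair_surj by (cases p) (auto intro: range_eqI[OF sym])
qed

lemma card_coprime_pairs_with_sum:
  assumes "1 < n"
  shows "card {(a, b). 0 < a \<and> 0 < b \<and> coprime a b \<and> a + b = n} = totient n"
proof -
  have "{(a, b). 0 < a \<and> 0 < b \<and> coprime a b \<and> a + b = n} = (\<lambda>a. (a, n - a)) ` totatives n"
  proof (intro set_eqI iffI)
    fix p assume "p \<in> {(a, b). 0 < a \<and> 0 < b \<and> coprime a b \<and> a + b = n}"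
    then obtain a b where p: "p = (a, b)" and ab: "0 < a" "0 < b" "coprime a b" "a + b = n"
      by blast
    then have "a \<in> totatives n"
      by (auto simp: in_totatives_iff coprime_iff_gcd_eq_1)
    with p ab show "p \<in> (\<lambda>a. (a, n - a)) ` totatives n"
      by force
  next
    fix p assume "p \<in> (\<lambda>a. (a, n - a)) ` totatives n"
    then obtain a where p: "p = (a, n - a)" and a: "a \<in> totatives n" by blast
    then have "0 < a" "a < n" "coprime a n"
      using totatives_less[OF a assms] by (auto simp: in_totatives_iff)
    moreover from this have "coprime a (n - a)"
      by (simp add: coprime_iff_gcd_eq_1 gcd.commute[of a] gcd_diff1_nat)
    ultimately show "p \<in> {(a, b). 0 < a \<and> 0 < b \<and> coprime a b \<and> a + b = n}"
      using p by auto
  qed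
  moreover have "inj_on (\<lambda>a. (a, n - a)) (totatives n)"
    by (rule inj_onI) simp
  ultimately show ?thesis
    by (simp add: card_image totient_def)
qed

theorem proposition1:
  fixes N :: nat
  assumes "N > 0"
  shows "card {s :: letter list. num_subseq s = N} = totient (N + 1)"
proof -
  let ?pairs = "{(a, b). 0 < a \<and> 0 < b \<and> coprime a b \<and> a + b = N + 1}"
  have "num_subseq s = N \<longleftrightarrow> sb_pair s \<in> ?pairs" for s
  proof -
    obtain a b where ab: "sb_pair s = (a, b)" by fastforce
    show ?thesis
      using num_subseq_sb_pair[OF ab] sb_pair_pos[OF ab] coprime_sb_pair[OF ab] ab by auto
  qed
  then have "{s. num_subseq s = N} = sb_pair -` ?pairs"
    by (simp add: vimage_def)
  then have "card {s. num_subseq s = N} = card ?pairs"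
    using card_vimage_inj[OF inj_sb_pair, of ?pairs] by (auto simp: range_sb_pair)
  also have "\<dots> = totient (N + 1)"
    using assms by (intro card_coprime_pairs_with_sum) simp
  finally show ?thesis .
qed

end
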